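(* The clique number of the orthomorphism graph of $\mathbb{Z}_2\times\mathbb{Z}_4$ is $2$; that is, $\omega(\mathbb{Z}_2\times\mathbb{Z}_4)=2$.
   Context: A normalised orthomorphism of a finite group $G$ is a bijection $\theta\colon G\to G$ with $\theta(e)=e$ such that $x\mapsto x^{-1}\theta(x)$ is a bijection of $G$. Two orthomorphisms $\theta_1,\theta_2$ are orthogonal if $x\mapsto\theta_1(x)^{-1}\theta_2(x)$ is a bijection of $G$. The orthomorphism graph $\mathrm{Orth}(G)$ has the normalised orthomorphisms of $G$ as vertices, two being adjacent iff they are orthogonal; $\omega(G)$ is the largest size of a complete subgraph of $\mathrm{Orth}(G)$. *)

theory Defs
  imports "HOL-Algebra.Elementary_Groups"
begin

text \<open>Normalised orthomorphisms of a group G, taken as extensional maps on the carrier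
  (so that distinct vertices of the orthomorphism graph are distinct HOL functions).\<close>

definition normalised_orthomorphism :: "('a, 'b) monoid_scheme \<Rightarrow> ('a \<Rightarrow> 'a) \<Rightarrow> bool" where
  "normalised_orthomorphism G \<theta> \<longleftrightarrow>
     \<theta> \<in> extensional (carrier G) \<and>
     bij_betw \<theta> (carrier G) (carrier G) \<and>
     \<theta> \<one>\<^bsub>G\<^esub> = \<one>\<^bsub>G\<^esub> \<and>
     bij_betw (\<lambda>x. inv\<^bsub>G\<^esub> x \<otimes>\<^bsub>G\<^esub> \<theta> x) (carrier G) (carrier G)"

definition orthogonal_orth :: "('a, 'b) monoid_scheme \<Rightarrow> ('a \<Rightarrow> 'a) \<Rightarrow> ('a \<Rightarrow> 'a) \<Rightarrow> bool" where
  "orthogonal_orth G \<theta>1 \<theta>2 \<longleftrightarrow>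
     bij_betw (\<lambda>x. inv\<^bsub>G\<^esub> (\<theta>1 x) \<otimes>\<^bsub>G\<^esub> \<theta>2 x) (carrier G) (carrier G)"

definition orth_clique :: "('a, 'b) monoid_scheme \<Rightarrow> ('a \<Rightarrow> 'a) set \<Rightarrow> bool" where
  "orth_clique G S \<longleftrightarrow>
     S \<subseteq> {\<theta>. normalised_orthomorphism G \<theta>} \<and>
     (\<forall>\<theta>1\<in>S. \<forall>\<theta>2\<in>S. \<theta>1 \<noteq> \<theta>2 \<longrightarrow> orthogonal_orth G \<theta>1 \<theta>2)"

definition orth_clique_number :: "('a, 'b) monoid_scheme \<Rightarrow> nat" where
  "orth_clique_number G = Max (card ` {S. orth_clique G S})"

end

theory Submission
  imports Defs
begin

text \<open>An extensional map on \<open>\<int>\<^sub>2 \<times> \<int>\<^sub>4\<close> is determined by its list of values on a fixed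
  enumeration of the eight elements, and the orthomorphism conditions become distinctness
  conditions on that list. A backtracking search over value lists finds exactly 48 normalised
  orthomorphisms; an exhaustive check shows that no three of them are pairwise orthogonal,
  while some two of them are.\<close>

lemma bij_betw_set_iff_distinct_map:
  assumes "distinct xs"
  shows "bij_betw f (set xs) (set xs) \<longleftrightarrow> distinct (map f xs) \<and> f ` set xs \<subseteq> set xs"
proof
  assume "bij_betw f (set xs) (set xs)"
  then show "distinct (map f xs) \<and> f ` set xs \<subseteq> set xs"
    using assms by (auto simp: bij_betw_def distinct_map)
next
  assume *: "distinct (map f xs) \<and> f ` set xs \<subseteq> set xs"
  then have inj: "inj_on f (set xs)"
    by (simp add: distinct_map)
  then have "f ` set xs = set xs"
    using * by (meson card_image card_subset_eq finite_set)
  with inj show "bij_betw f (set xs) (set xs)"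
    by (simp add: bij_betw_def)
qed

lemma normalised_orthomorphism_image:
  "normalised_orthomorphism G \<theta> \<Longrightarrow> \<theta> ` carrier G \<subseteq> carrier G"
  by (simp add: normalised_orthomorphism_def bij_betw_def)

lemma orth_clique_card_le_2:
  assumes no_triangle: "\<And>\<alpha> \<beta> \<gamma>. normalised_orthomorphism G \<alpha> \<Longrightarrow> normalised_orthomorphism G \<beta> \<Longrightarrow>
      normalised_orthomorphism G \<gamma> \<Longrightarrow> \<alpha> \<noteq> \<beta> \<Longrightarrow> \<alpha> \<noteq> \<gamma> \<Longrightarrow> \<beta> \<noteq> \<gamma> \<Longrightarrow>
      orthogonal_orth G \<alpha> \<beta> \<Longrightarrow> orthogonal_orth G \<alpha> \<gamma> \<Longrightarrow> orthogonal_orth G \<beta> \<gamma> \<Longrightarrow> False"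
    and clique: "orth_clique G S"
  shows "card S \<le> 2"
proof (rule ccontr)
  assume "\<not> card S \<le> 2"
  then have "3 \<le> card S"
    by simp
  then obtain T where "T \<subseteq> S" "card T = 3"
    by (meson obtain_subset_with_card_n)
  then obtain \<alpha> \<beta> \<gamma> where "\<alpha> \<in> S" "\<beta> \<in> S" "\<gamma> \<in> S" "\<alpha> \<noteq> \<beta>" "\<alpha> \<noteq> \<gamma>" "\<beta> \<noteq> \<gamma>"
    by (auto simp: card_3_iff)
  with clique show False
    by (intro no_triangle[of \<alpha> \<beta> \<gamma>]) (auto simp: orth_clique_def)
qed

lemma orth_clique_number_eqI:
  assumes "\<And>S. orth_clique G S \<Longrightarrow> card S \<le> k" and "orth_clique G S" and "card S = k"
  shows "orth_clique_number G = k"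
proof -
  have "card ` {S. orth_clique G S} \<subseteq> {..k}"
    using assms(1) by auto
  then have "finite (card ` {S. orth_clique G S})"
    by (rule finite_subset) simp
  then show ?thesis
    unfolding orth_clique_number_def using assms by (intro Max_eqI) auto
qed

type_synonym z2z4 = "int \<times> int"

abbreviation Z2Z4 :: "(z2z4, unit) monoid_scheme" where
  "Z2Z4 \<equiv> integer_mod_group 2 \<times>\<times> integer_mod_group 4"

definition z2z4_elems :: "z2z4 list" where
  "z2z4_elems = [(0,0), (0,1), (0,2), (0,3), (1,0), (1,1), (1,2), (1,3)]"

fun z2z4_ldiv :: "z2z4 \<Rightarrow> z2z4 \<Rightarrow> z2z4" where
  "z2z4_ldiv (a, b) (c, d) = ((c - a) mod 2, (d - b) mod 4)"

lemma carrier_Z2Z4: "carrier Z2Z4 = set z2z4_elems"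
proof -
  have "{0..<2::int} = {0, 1}" "{0..<4::int} = {0, 1, 2, 3}"
    by auto
  then show ?thesis
    by (auto simp: carrier_integer_mod_group z2z4_elems_def)
qed

lemma distinct_z2z4_elems: "distinct z2z4_elems"
  by (simp add: z2z4_elems_def)

lemma length_z2z4_elems: "length z2z4_elems = 8"
  by (simp add: z2z4_elems_def)

lemma inv_mult_Z2Z4:
  "x \<in> carrier Z2Z4 \<Longrightarrow> y \<in> carrier Z2Z4 \<Longrightarrow> inv\<^bsub>Z2Z4\<^esub> x \<otimes>\<^bsub>Z2Z4\<^esub> y = z2z4_ldiv x y"
  by (cases x; cases y) (auto simp: inv_DirProd mod_add_left_eq carrier_integer_mod_group)

text \<open>A list \<open>v\<close> stands for the partial map sending the \<open>i\<close>-th element of \<open>z2z4_elems\<close>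
  to \<open>v ! i\<close>; \<open>map2\<close> truncates to the shorter list, so the condition only concerns
  the elements where the map is defined.\<close>

definition partial_orth :: "z2z4 list \<Rightarrow> bool" where
  "partial_orth v \<longleftrightarrow> set v \<subseteq> set z2z4_elems \<and> distinct v \<and>
     distinct (map2 z2z4_ldiv z2z4_elems v) \<and> (v \<noteq> [] \<longrightarrow> hd v = (0, 0))"

fun partial_orths :: "nat \<Rightarrow> z2z4 list list" where
  "partial_orths 0 = [[]]"
| "partial_orths (Suc k) = concat (map (\<lambda>p. map (\<lambda>y. p @ [y])
     (filter (\<lambda>y. partial_orth (p @ [y])) z2z4_elems)) (partial_orths k))"

lemma partial_orth_snocD: "partial_orth (p @ [y]) \<Longrightarrow> partial_orth p"
proof -
  assume *: "partial_orth (p @ [y])"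
  have "zip (take (length p) z2z4_elems) p = take (length p) (zip z2z4_elems p)"
    by (simp add: take_zip)
  also have "\<dots> = zip z2z4_elems p"
    by simp
  finally have "map2 z2z4_ldiv z2z4_elems p = take (length p) (map2 z2z4_ldiv z2z4_elems (p @ [y]))"
    by (simp add: take_map take_zip)
  with * show "partial_orth p"
    by (cases p) (auto simp: partial_orth_def distinct_take)
qed

lemma partial_orth_in_partial_orths: "partial_orth v \<Longrightarrow> v \<in> set (partial_orths (length v))"
proof (induction v rule: rev_induct)
  case Nil
  then show ?case by simp
next
  case (snoc y p)
  then have "p \<in> set (partial_orths (length p))"
    using partial_orth_snocD by blast
  moreover have "y \<in> set z2z4_elems"
    using snoc.prems by (simp add: partial_orth_def)
  ultimately show ?case
    using snoc.prems by force
qed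

lemma partial_orths_sound: "v \<in> set (partial_orths k) \<Longrightarrow> partial_orth v \<and> length v = k"
  by (induction k arbitrary: v) (auto simp: partial_orth_def[of "[]"])

definition orthogonal_lists :: "z2z4 list \<Rightarrow> z2z4 list \<Rightarrow> bool" where
  "orthogonal_lists v w \<longleftrightarrow> distinct (map2 z2z4_ldiv v w)"

definition orth_table :: "z2z4 list list" where
  "orth_table =
   [[(0,0),(0,2),(1,0),(1,2),(0,1),(1,3),(1,1),(0,3)],
    [(0,0),(0,2),(1,0),(1,2),(1,3),(0,1),(0,3),(1,1)],
    [(0,0),(0,2),(1,1),(1,3),(0,1),(0,3),(1,0),(1,2)],
    [(0,0),(0,2),(1,1),(1,3),(1,2),(1,0),(0,3),(0,1)],
    [(0,0),(0,2),(1,2),(1,0),(0,3),(1,3),(1,1),(0,1)],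
    [(0,0),(0,2),(1,2),(1,0),(1,3),(0,3),(0,1),(1,1)],
    [(0,0),(0,2),(1,3),(1,1),(0,3),(0,1),(1,0),(1,2)],
    [(0,0),(0,2),(1,3),(1,1),(1,2),(1,0),(0,1),(0,3)],
    [(0,0),(0,3),(1,0),(1,3),(0,1),(1,2),(1,1),(0,2)],
    [(0,0),(0,3),(1,0),(1,3),(1,1),(0,2),(0,1),(1,2)],
    [(0,0),(0,3),(1,1),(1,0),(0,2),(0,1),(1,3),(1,2)],
    [(0,0),(0,3),(1,1),(1,0),(1,3),(1,2),(0,2),(0,1)],
    [(0,0),(0,3),(1,2),(1,1),(0,1),(1,0),(1,3),(0,2)],
    [(0,0),(0,3),(1,2),(1,1),(1,3),(0,2),(0,1),(1,0)],
    [(0,0),(0,3),(1,3),(1,2),(0,2),(0,1),(1,1),(1,0)],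
    [(0,0),(0,3),(1,3),(1,2),(1,1),(1,0),(0,2),(0,1)],
    [(0,0),(1,0),(0,1),(1,1),(1,2),(0,2),(1,3),(0,3)],
    [(0,0),(1,0),(0,1),(1,3),(0,2),(1,2),(0,3),(1,1)],
    [(0,0),(1,0),(0,3),(1,1),(0,1),(1,3),(0,2),(1,2)],
    [(0,0),(1,0),(0,3),(1,3),(1,2),(0,2),(1,1),(0,1)],
    [(0,0),(1,0),(1,2),(0,2),(0,1),(0,3),(1,3),(1,1)],
    [(0,0),(1,0),(1,2),(0,2),(1,1),(1,3),(0,3),(0,1)],
    [(0,0),(1,0),(1,3),(0,1),(0,2),(1,2),(1,1),(0,3)],
    [(0,0),(1,0),(1,3),(0,1),(1,1),(0,3),(0,2),(1,2)],
    [(0,0),(1,1),(0,1),(1,0),(1,2),(0,3),(1,3),(0,2)],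
    [(0,0),(1,1),(0,1),(1,2),(0,2),(1,3),(0,3),(1,0)],
    [(0,0),(1,1),(0,3),(1,0),(0,2),(1,3),(0,1),(1,2)],
    [(0,0),(1,1),(0,3),(1,2),(1,3),(0,2),(1,0),(0,1)],
    [(0,0),(1,1),(1,0),(0,1),(0,3),(0,2),(1,3),(1,2)],
    [(0,0),(1,1),(1,0),(0,1),(1,3),(1,2),(0,3),(0,2)],
    [(0,0),(1,1),(1,3),(0,2),(0,3),(1,2),(1,0),(0,1)],
    [(0,0),(1,1),(1,3),(0,2),(1,2),(0,3),(0,1),(1,0)],
    [(0,0),(1,2),(0,1),(1,1),(0,3),(1,3),(0,2),(1,0)],
    [(0,0),(1,2),(0,1),(1,3),(1,1),(0,3),(1,0),(0,2)],
    [(0,0),(1,2),(0,3),(1,1),(1,3),(0,1),(1,0),(0,2)],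
    [(0,0),(1,2),(0,3),(1,3),(0,2),(1,0),(0,1),(1,1)],
    [(0,0),(1,2),(1,0),(0,2),(0,3),(0,1),(1,3),(1,1)],
    [(0,0),(1,2),(1,0),(0,2),(1,1),(1,3),(0,1),(0,3)],
    [(0,0),(1,2),(1,1),(0,1),(0,2),(1,0),(1,3),(0,3)],
    [(0,0),(1,2),(1,1),(0,1),(1,3),(0,3),(0,2),(1,0)],
    [(0,0),(1,3),(0,1),(1,0),(0,3),(1,2),(0,2),(1,1)],
    [(0,0),(1,3),(0,1),(1,2),(1,1),(0,2),(1,0),(0,3)],
    [(0,0),(1,3),(0,3),(1,0),(1,2),(0,1),(1,1),(0,2)],
    [(0,0),(1,3),(0,3),(1,2),(0,1),(1,0),(0,2),(1,1)],
    [(0,0),(1,3),(1,1),(0,2),(0,1),(1,2),(1,0),(0,3)],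
    [(0,0),(1,3),(1,1),(0,2),(1,2),(0,1),(0,3),(1,0)],
    [(0,0),(1,3),(1,2),(0,1),(0,3),(0,2),(1,1),(1,0)],
    [(0,0),(1,3),(1,2),(0,1),(1,1),(1,0),(0,3),(0,2)]]"

lemma partial_orths_8: "partial_orths 8 = orth_table"
  by code_simp

lemma orth_table_no_triangle:
  "\<forall>u\<in>set orth_table. \<forall>v\<in>set (filter (orthogonal_lists u) orth_table).
     \<forall>w\<in>set (filter (orthogonal_lists u) orth_table). v = w \<or> \<not> orthogonal_lists v w"
  by code_simp

lemma orth_table_orthogonal_pair:
  "\<exists>u\<in>set orth_table. \<exists>v\<in>set orth_table. u \<noteq> v \<and> orthogonal_lists u v \<and> orthogonal_lists v u"
  by code_simp

lemma extensional_Z2Z4_eq_iff: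
  assumes "f \<in> extensional (carrier Z2Z4)" and "g \<in> extensional (carrier Z2Z4)"
  shows "f = g \<longleftrightarrow> map f z2z4_elems = map g z2z4_elems"
proof -
  have "f = g \<longleftrightarrow> (\<forall>x\<in>carrier Z2Z4. f x = g x)"
    using assms by (auto intro: extensionalityI)
  then show ?thesis
    by (simp add: carrier_Z2Z4 del: carrier_DirProd)
qed

lemma bij_betw_inv_mult_Z2Z4_iff:
  assumes "f ` carrier Z2Z4 \<subseteq> carrier Z2Z4" and "g ` carrier Z2Z4 \<subseteq> carrier Z2Z4"
  shows "bij_betw (\<lambda>x. inv\<^bsub>Z2Z4\<^esub> (f x) \<otimes>\<^bsub>Z2Z4\<^esub> g x) (carrier Z2Z4) (carrier Z2Z4) \<longleftrightarrow>
    distinct (map2 z2z4_ldiv (map f z2z4_elems) (map g z2z4_elems))"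
proof -
  interpret group Z2Z4
    by (simp add: DirProd_group)
  have "bij_betw (\<lambda>x. inv\<^bsub>Z2Z4\<^esub> (f x) \<otimes>\<^bsub>Z2Z4\<^esub> g x) (carrier Z2Z4) (carrier Z2Z4) \<longleftrightarrow>
      bij_betw (\<lambda>x. z2z4_ldiv (f x) (g x)) (carrier Z2Z4) (carrier Z2Z4)"
    using assms by (intro bij_betw_cong) (auto simp: inv_mult_Z2Z4 image_subset_iff simp del: carrier_DirProd)
  also have "\<dots> \<longleftrightarrow> distinct (map (\<lambda>x. z2z4_ldiv (f x) (g x)) z2z4_elems)"
  proof -
    have "z2z4_ldiv (f x) (g x) \<in> carrier Z2Z4" if "x \<in> carrier Z2Z4" for x
    proof -
      have "f x \<in> carrier Z2Z4" "g x \<in> carrier Z2Z4"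
        using assms that by blast+
      then show ?thesis
        by (simp flip: inv_mult_Z2Z4 del: carrier_DirProd)
    qed
    then show ?thesis
      by (auto simp: carrier_Z2Z4 bij_betw_set_iff_distinct_map distinct_z2z4_elems
          simp del: carrier_DirProd)
  qed
  finally show ?thesis
    by (simp add: map2_map_map)
qed

lemma normalised_orthomorphism_Z2Z4_iff:
  "normalised_orthomorphism Z2Z4 \<theta> \<longleftrightarrow>
    \<theta> \<in> extensional (carrier Z2Z4) \<and> partial_orth (map \<theta> z2z4_elems)"
proof -
  have bij: "bij_betw \<theta> (carrier Z2Z4) (carrier Z2Z4) \<longleftrightarrow>
      distinct (map \<theta> z2z4_elems) \<and> \<theta> ` carrier Z2Z4 \<subseteq> carrier Z2Z4"
    by (simp add: carrier_Z2Z4 bij_betw_set_iff_distinct_map distinct_z2z4_elems del: carrier_DirProd)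
  have one: "\<theta> \<one>\<^bsub>Z2Z4\<^esub> = hd (map \<theta> z2z4_elems)" "map \<theta> z2z4_elems \<noteq> []"
    by (simp_all add: z2z4_elems_def)
  have image: "\<theta> ` carrier Z2Z4 \<subseteq> carrier Z2Z4 \<longleftrightarrow> set (map \<theta> z2z4_elems) \<subseteq> set z2z4_elems"
    by (simp add: carrier_Z2Z4 del: carrier_DirProd)
  have "bij_betw (\<lambda>x. inv\<^bsub>Z2Z4\<^esub> x \<otimes>\<^bsub>Z2Z4\<^esub> \<theta> x) (carrier Z2Z4) (carrier Z2Z4) \<longleftrightarrow>
      distinct (map2 z2z4_ldiv z2z4_elems (map \<theta> z2z4_elems))"
    if "\<theta> ` carrier Z2Z4 \<subseteq> carrier Z2Z4"
    using bij_betw_inv_mult_Z2Z4_iff[of "\<lambda>x. x" \<theta>] that by simp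
  with one image show ?thesis
    unfolding normalised_orthomorphism_def partial_orth_def bij by auto
qed

lemma orthogonal_orth_Z2Z4_iff:
  assumes "normalised_orthomorphism Z2Z4 \<alpha>" and "normalised_orthomorphism Z2Z4 \<beta>"
  shows "orthogonal_orth Z2Z4 \<alpha> \<beta> \<longleftrightarrow> orthogonal_lists (map \<alpha> z2z4_elems) (map \<beta> z2z4_elems)"
  unfolding orthogonal_orth_def orthogonal_lists_def
  by (intro bij_betw_inv_mult_Z2Z4_iff normalised_orthomorphism_image assms)

lemma normalised_orthomorphism_Z2Z4_in_orth_table:
  assumes "normalised_orthomorphism Z2Z4 \<theta>"
  shows "map \<theta> z2z4_elems \<in> set orth_table"
proof -
  have "partial_orth (map \<theta> z2z4_elems)"
    using assms normalised_orthomorphism_Z2Z4_iff by blast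
  then have "map \<theta> z2z4_elems \<in> set (partial_orths 8)"
    using partial_orth_in_partial_orths by (fastforce simp: length_z2z4_elems)
  then show ?thesis
    by (simp add: partial_orths_8)
qed

lemma Z2Z4_no_orthogonal_triangle:
  assumes "normalised_orthomorphism Z2Z4 \<alpha>" "normalised_orthomorphism Z2Z4 \<beta>"
    "normalised_orthomorphism Z2Z4 \<gamma>" and "\<beta> \<noteq> \<gamma>"
    and "orthogonal_orth Z2Z4 \<alpha> \<beta>" "orthogonal_orth Z2Z4 \<alpha> \<gamma>" "orthogonal_orth Z2Z4 \<beta> \<gamma>"
  shows False
proof -
  let ?u = "map \<alpha> z2z4_elems" and ?v = "map \<beta> z2z4_elems" and ?w = "map \<gamma> z2z4_elems"
  have "?u \<in> set orth_table" "?v \<in> set orth_table" "?w \<in> set orth_table"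
    using assms(1-3) by (simp_all add: normalised_orthomorphism_Z2Z4_in_orth_table)
  moreover have "orthogonal_lists ?u ?v" "orthogonal_lists ?u ?w" "orthogonal_lists ?v ?w"
    using assms by (simp_all add: orthogonal_orth_Z2Z4_iff)
  moreover have "?v \<noteq> ?w"
    using assms(2-4) extensional_Z2Z4_eq_iff normalised_orthomorphism_Z2Z4_iff by blast
  ultimately show False
    using orth_table_no_triangle by (simp only: set_filter mem_Collect_eq Ball_def) blast
qed

definition z2z4_fun_of_values :: "z2z4 list \<Rightarrow> z2z4 \<Rightarrow> z2z4" where
  "z2z4_fun_of_values v = restrict (\<lambda>x. the (map_of (zip z2z4_elems v) x)) (carrier Z2Z4)"

lemma map_z2z4_fun_of_values:
  assumes "length v = 8"
  shows "map (z2z4_fun_of_values v) z2z4_elems = v"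
proof (rule nth_equalityI)
  fix i
  assume "i < length (map (z2z4_fun_of_values v) z2z4_elems)"
  then have "i < 8" and "z2z4_elems ! i \<in> carrier Z2Z4"
    by (simp_all add: carrier_Z2Z4 length_z2z4_elems del: carrier_DirProd)
  then show "map (z2z4_fun_of_values v) z2z4_elems ! i = v ! i"
    using assms map_of_zip_nth[OF _ distinct_z2z4_elems, of v i]
    by (simp add: z2z4_fun_of_values_def length_z2z4_elems)
qed (simp add: assms length_z2z4_elems)

lemma Z2Z4_orthogonal_pair: "\<exists>S. orth_clique Z2Z4 S \<and> card S = 2"
proof -
  obtain u v where uv: "u \<in> set orth_table" "v \<in> set orth_table" "u \<noteq> v"
    "orthogonal_lists u v" "orthogonal_lists v u"
    using orth_table_orthogonal_pair by blast
  have sound: "partial_orth w" "length w = 8" if "w \<in> set orth_table" for w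
    using that partial_orths_sound by (simp_all flip: partial_orths_8)
  have map_values: "map (z2z4_fun_of_values w) z2z4_elems = w" if "w \<in> set orth_table" for w
    using map_z2z4_fun_of_values sound(2) that by blast
  have normalised: "normalised_orthomorphism Z2Z4 (z2z4_fun_of_values w)" if "w \<in> set orth_table" for w
    using that sound map_values by (simp add: normalised_orthomorphism_Z2Z4_iff z2z4_fun_of_values_def)
  have "orth_clique Z2Z4 {z2z4_fun_of_values u, z2z4_fun_of_values v}"
    using uv normalised map_values by (auto simp: orth_clique_def orthogonal_orth_Z2Z4_iff)
  moreover have "z2z4_fun_of_values u \<noteq> z2z4_fun_of_values v"
    using uv map_values by metis
  ultimately show ?thesis
    by (intro exI[of _ "{z2z4_fun_of_values u, z2z4_fun_of_values v}"]) simp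
qed

theorem corollary3:
  shows "orth_clique_number (integer_mod_group 2 \<times>\<times> integer_mod_group 4) = 2"
proof -
  obtain S where "orth_clique Z2Z4 S" and "card S = 2"
    using Z2Z4_orthogonal_pair by blast
  then show ?thesis
    using orth_clique_card_le_2[OF Z2Z4_no_orthogonal_triangle] by (intro orth_clique_number_eqI)
qed

end
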